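(* Consider the static multi-period newsvendor problem (MPNVP) with $T$ periods, described in the context, where the demands $X_1,\dots,X_T$ have a joint distribution $F$ which is continuous, and for $t=1,\dots,T$ let $\tilde F_t$ denote the CDF of $Y_t=\sum_{k=1}^t X_k$. Let $\nu\ge 0$ be a Lagrange multiplier for the budget constraint, and suppose that (1) $\nu \le \frac{b}{w_t-w_{t+1}}-1$ for all $t\in\{1,\dots,T-1\}$ (with $w_t>w_{t+1}$), and (2) $\nu \le \frac{b+p}{w_T}-1$. Then the vector $\boldsymbol q^*=(q_1^*,\dots,q_T^* )$ given by $$q_1^*=\tilde F_1^{-1}\!\left(\frac{b-(1+\nu)(w_1-w_2)}{h+b}\right),$$ $$q_t^*=\tilde F_t^{-1}\!\left(\frac{b-(1+\nu)(w_t-w_{t+1})}{h+b}\right)-\tilde F_{t-1}^{-1}\!\left(\frac{b-(1+\nu)(w_{t-1}-w_t)}{h+b}\right)\quad (2\le t\le T-1),$$ $$q_T^*=\tilde F_T^{-1}\!\left(\frac{b-(1+\nu)w_T+p}{h+b+p}\right)-\tilde F_{T-1}^{-1}\!\left(\frac{b-(1+\nu)(w_{T-1}-w_T)}{h+b}\right)$$ satisfies the KKT stationarity condition of MPNVP, i.e. $\frac{\partial}{\partial q_j}C_F(\boldsymbol q^* )+\nu w_j=0$ for all $j=1,\dots,T$.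
   Context: Setting (MPNVP): there are $T$ periods $t\in\{1,\dots,T\}$. The decision is $\boldsymbol q=(q_1,\dots,q_T)$, where $q_t$ is the amount of stock delivered at the start of period $t$. The demand in period $t$ is a random variable $X_t$, with $\boldsymbol X=(X_1,\dots,X_T)$ having joint CDF $F$. Inventory evolves by $I_0=0$, $I_t=I_{t-1}+q_t-X_t$, so $I_t=\sum_{k=1}^t(q_k-X_k)$; write $I_t^+=\max\{I_t,0\}$, $I_t^-=\max\{-I_t,0\}$. Nonnegative constants: holding cost $h$, backorder cost $b$, selling price $p$ (with $h+b>0$), unit ordering costs $w_1\ge w_2\ge\dots\ge w_T>0$, and budget $W$. The expected cost is $$C_F(\boldsymbol q)=p\,\mathbb E_F[I_T^-]+\sum_{t=1}^T\Big(h\,\mathbb E_F[I_t^+]+b\,\mathbb E_F[I_t^-]+w_tq_t-p\,\mathbb E_F[X_t]\Big),$$ and MPNVP is $\min_{\boldsymbol q} C_F(\boldsymbol q)$ subject to $\sum_{t=1}^T w_tq_t\le W$ and $q_t\ge 0$ for all $t$. The Lagrangian (ignoring non-negativity constraints) is $L(\boldsymbol q,\nu)=C_F(\boldsymbol q)+\nu\left(\sum_{t=1}^T w_tq_t-W\right)$, and the stationarity condition is $\partial L/\partial q_j=0$ for all $j$. In condition (1), if $w_t=w_{t+1}$ the corresponding constraint is vacuous. *)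

theory Defs
  imports "HOL-Probability.Probability"
begin

definition inv_level :: "(nat \<Rightarrow> real) \<Rightarrow> (nat \<Rightarrow> 'a \<Rightarrow> real) \<Rightarrow> nat \<Rightarrow> 'a \<Rightarrow> real" where
  "inv_level q X t \<omega> = (\<Sum>k=1..t. q k - X k \<omega>)"

definition mpnvp_cost ::
  "'a measure \<Rightarrow> nat \<Rightarrow> real \<Rightarrow> real \<Rightarrow> real \<Rightarrow> (nat \<Rightarrow> real) \<Rightarrow> (nat \<Rightarrow> 'a \<Rightarrow> real)
   \<Rightarrow> (nat \<Rightarrow> real) \<Rightarrow> real" where
  "mpnvp_cost M T h b p w X q =
     p * (\<integral>\<omega>. max (- inv_level q X T \<omega>) 0 \<partial>M) +
     (\<Sum>t=1..T. h * (\<integral>\<omega>. max (inv_level q X t \<omega>) 0 \<partial>M)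
              + b * (\<integral>\<omega>. max (- inv_level q X t \<omega>) 0 \<partial>M)
              + w t * q t - p * (\<integral>\<omega>. X t \<omega> \<partial>M))"

definition cum_cdf :: "'a measure \<Rightarrow> (nat \<Rightarrow> 'a \<Rightarrow> real) \<Rightarrow> nat \<Rightarrow> real \<Rightarrow> real" where
  "cum_cdf M X t y = measure M {\<omega> \<in> space M. (\<Sum>k=1..t. X k \<omega>) \<le> y}"

definition quantile :: "(real \<Rightarrow> real) \<Rightarrow> real \<Rightarrow> real" where
  "quantile G a = Inf {x. a \<le> G x}"

definition quantile_finite :: "(real \<Rightarrow> real) \<Rightarrow> real \<Rightarrow> bool" where
  "quantile_finite G a \<longleftrightarrow> {x. a \<le> G x} \<noteq> {} \<and> bdd_below {x. a \<le> G x}"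

end

theory Submission
  imports Defs
begin

(* Only the partial sums Q_t = q_1 + ... + q_t enter the cost, through E[(Q_t - Y_t)^+] and
   E[(Y_t - Q_t)^+] = E[(Q_t - Y_t)^+] - Q_t + E[Y_t].  Because the joint law of the demands is
   absolutely continuous, every hyperplane {Y_t = c} is null, so the CDF F_t of Y_t is continuous
   and d/dQ E[(Q - Y_t)^+] = F_t(Q).  Hence the partial derivative of the cost in q_j is
   sum_{t >= j} ((h + b) F_t(Q_t) - b) + p (F_T(Q_T) - 1) + w_j.  For q* the partial sums Q_t are
   exactly the quantiles in the formula, continuity gives F_t(F_t^{-1}(a)) = a, and the sum then
   telescopes in w to -(1 + nu) w_j. *)

lemma sum_eq_null_sets_lborel_PiM:
  fixes I J :: "'i set" and c :: real
  assumes I: "finite I" and J: "J \<subseteq> I" "J \<noteq> {}"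
  shows "{x \<in> space (Pi\<^sub>M I (\<lambda>_. lborel)). (\<Sum>k\<in>J. x k) = c} \<in> null_sets (Pi\<^sub>M I (\<lambda>_. lborel))"
proof -
  interpret product_sigma_finite "\<lambda>_::'i. lborel :: real measure"
    by (simp add: product_sigma_finite_def lborel.sigma_finite_measure_axioms)
  obtain i where i: "i \<in> J" using J by blast
  let ?H = "{x \<in> space (Pi\<^sub>M I (\<lambda>_. lborel)). (\<Sum>k\<in>J. x k) = c}"
  have "(\<lambda>x. \<Sum>k\<in>J. x k) \<in> borel_measurable (Pi\<^sub>M I (\<lambda>_. lborel))"
    using J by (intro borel_measurable_sum measurable_component_singleton) auto
  then have H: "?H \<in> sets (Pi\<^sub>M I (\<lambda>_. lborel))"
    by measurable
  have iI: "i \<in> I" using i J by auto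
  have "emeasure (Pi\<^sub>M I (\<lambda>_. lborel)) ?H = integral\<^sup>N (Pi\<^sub>M I (\<lambda>_. lborel)) (indicator ?H)"
    using H by simp
  also have "\<dots> = (\<integral>\<^sup>+ x. (\<integral>\<^sup>+ y. indicator ?H (x(i := y)) \<partial>lborel) \<partial>Pi\<^sub>M (I - {i}) (\<lambda>_. lborel))"
    using product_nn_integral_insert[of "I - {i}" i "indicator ?H"] H I iI by (simp add: insert_absorb)
  also have "\<dots> \<le> (\<integral>\<^sup>+ x. (\<integral>\<^sup>+ y. indicator {c - (\<Sum>k\<in>J - {i}. x k)} y \<partial>lborel) \<partial>Pi\<^sub>M (I - {i}) (\<lambda>_. lborel))"
  proof (intro nn_integral_mono)
    fix x :: "'i \<Rightarrow> real" and y :: real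
    have "(\<Sum>k\<in>J. (x(i := y)) k) = y + (\<Sum>k\<in>J - {i}. x k)"
      using i I J by (simp add: sum.remove[of J i] finite_subset)
    then show "indicator ?H (x(i := y)) \<le> (indicator {c - (\<Sum>k\<in>J - {i}. x k)} y :: ennreal)"
      by (auto simp: indicator_def)
  qed
  also have "\<dots> = 0" by simp
  finally show ?thesis using H by (simp add: null_sets_def)
qed

lemma sum_eq_null_sets_if_absolutely_continuous:
  fixes X :: "'i \<Rightarrow> 'a \<Rightarrow> real" and c :: real
  assumes I: "finite I" and J: "J \<subseteq> I" "J \<noteq> {}"
    and X: "\<And>i. i \<in> I \<Longrightarrow> X i \<in> borel_measurable M"
    and ac: "absolutely_continuous (Pi\<^sub>M I (\<lambda>_. lborel))
               (distr M (Pi\<^sub>M I (\<lambda>_. lborel)) (\<lambda>\<omega>. \<lambda>i\<in>I. X i \<omega>))"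
  shows "{\<omega> \<in> space M. (\<Sum>k\<in>J. X k \<omega>) = c} \<in> null_sets M"
proof -
  let ?N = "Pi\<^sub>M I (\<lambda>_. lborel) :: ('i \<Rightarrow> real) measure"
  let ?\<Phi> = "\<lambda>\<omega>. \<lambda>i\<in>I. X i \<omega>"
  let ?H = "{x \<in> space ?N. (\<Sum>k\<in>J. x k) = c}"
  have \<Phi>: "?\<Phi> \<in> measurable M ?N"
    using X by (intro measurable_restrict) simp
  have "?H \<in> null_sets (distr M ?N ?\<Phi>)"
    using ac sum_eq_null_sets_lborel_PiM[OF I J] unfolding absolutely_continuous_def by blast
  then have null: "?\<Phi> -` ?H \<inter> space M \<in> null_sets M"
    using \<Phi> by (simp add: null_sets_distr_iff)
  have "(\<Sum>k\<in>J. ?\<Phi> \<omega> k) = (\<Sum>k\<in>J. X k \<omega>)" for \<omega>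
    using J by (intro sum.cong) auto
  then have "?\<Phi> -` ?H \<inter> space M = {\<omega> \<in> space M. (\<Sum>k\<in>J. X k \<omega>) = c}"
    using measurable_space[OF \<Phi>] by auto
  with null show ?thesis by simp
qed

lemma isCont_measure_le_if_null_level_set:
  fixes Y :: "'a \<Rightarrow> real"
  assumes M: "prob_space M" and Y: "Y \<in> borel_measurable M"
    and null: "{\<omega> \<in> space M. Y \<omega> = c} \<in> null_sets M"
  shows "isCont (\<lambda>y. measure M {\<omega> \<in> space M. Y \<omega> \<le> y}) c"
proof -
  interpret D: real_distribution "distr M borel Y"
    using prob_space.prob_space_distr[OF M Y] by (simp add: real_distribution_def real_distribution_axioms_def)
  have "cdf (distr M borel Y) = (\<lambda>y. measure M {\<omega> \<in> space M. Y \<omega> \<le> y})"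
    using Y by (auto simp: cdf_def measure_distr vimage_def Int_def conj_commute)
  moreover have "measure (distr M borel Y) {c} = 0"
    using Y null by (simp add: measure_distr vimage_def Int_def conj_commute measure_eq_0_null_sets)
  ultimately show ?thesis using D.isCont_cdf by metis
qed

lemma isCont_cum_cdf:
  fixes X :: "nat \<Rightarrow> 'a \<Rightarrow> real"
  assumes M: "prob_space M" and X: "\<And>t. t \<in> {1..T} \<Longrightarrow> X t \<in> borel_measurable M"
    and ac: "absolutely_continuous (Pi\<^sub>M {1..T} (\<lambda>_. lborel))
               (distr M (Pi\<^sub>M {1..T} (\<lambda>_. lborel)) (\<lambda>\<omega>. \<lambda>t\<in>{1..T}. X t \<omega>))"
    and t: "t \<in> {1..T}"
  shows "isCont (cum_cdf M X t) y"
  unfolding cum_cdf_def[abs_def]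
proof (rule isCont_measure_le_if_null_level_set[OF M])
  show "(\<lambda>\<omega>. \<Sum>k=1..t. X k \<omega>) \<in> borel_measurable M"
    using X t by auto
  show "{\<omega> \<in> space M. (\<Sum>k=1..t. X k \<omega>) = y} \<in> null_sets M"
    using t by (intro sum_eq_null_sets_if_absolutely_continuous[OF _ _ _ X ac]) auto
qed

lemma divide_between_min_max:
  fixes a b c y D :: real
  assumes "(y - c) * a \<le> D" "D \<le> (y - c) * b" "y \<noteq> c"
  shows "min a b \<le> D / (y - c)" "D / (y - c) \<le> max a b"
proof -
  have "a \<le> D / (y - c) \<and> D / (y - c) \<le> b \<or> b \<le> D / (y - c) \<and> D / (y - c) \<le> a"
  proof (cases "y > c")
    case True
    then show ?thesis using assms by (simp add: pos_le_divide_eq pos_divide_le_eq mult.commute)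
  next
    case False
    then have "y - c < 0" using assms(3) by simp
    then show ?thesis using assms by (simp add: neg_le_divide_eq neg_divide_le_eq mult.commute)
  qed
  then show "min a b \<le> D / (y - c)" "D / (y - c) \<le> max a b" by linarith+
qed

lemma expected_pos_part_increment_bounds:
  fixes Y :: "'a \<Rightarrow> real" and d e :: real
  assumes M: "prob_space M" and Y: "integrable M Y"
  shows "(d - e) * measure M {\<omega> \<in> space M. Y \<omega> \<le> e}
           \<le> (\<integral>\<omega>. max (d - Y \<omega>) 0 \<partial>M) - (\<integral>\<omega>. max (e - Y \<omega>) 0 \<partial>M)"
    and "(\<integral>\<omega>. max (d - Y \<omega>) 0 \<partial>M) - (\<integral>\<omega>. max (e - Y \<omega>) 0 \<partial>M)
           \<le> (d - e) * measure M {\<omega> \<in> space M. Y \<omega> \<le> d}"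
proof -
  interpret prob_space M by (rule M)
  have [measurable]: "Y \<in> borel_measurable M" using Y by (rule borel_measurable_integrable)
  have pos_part: "integrable M (\<lambda>\<omega>. max (c - Y \<omega>) 0)" for c
    using Y by (intro integrable_max Bochner_Integration.integrable_diff) auto
  have step: "integrable M (\<lambda>\<omega>. (d - e) * indicator {\<omega> \<in> space M. Y \<omega> \<le> c} \<omega>)"
    and step_integral: "(\<integral>\<omega>. (d - e) * indicator {\<omega> \<in> space M. Y \<omega> \<le> c} \<omega> \<partial>M)
                          = (d - e) * measure M {\<omega> \<in> space M. Y \<omega> \<le> c}" for c
    by (auto simp: emeasure_eq_measure intro!: integrable_mult_right integrable_real_indicator)
  have diff: "(\<integral>\<omega>. max (d - Y \<omega>) 0 \<partial>M) - (\<integral>\<omega>. max (e - Y \<omega>) 0 \<partial>M)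
                = (\<integral>\<omega>. max (d - Y \<omega>) 0 - max (e - Y \<omega>) 0 \<partial>M)"
    using pos_part pos_part by (rule Bochner_Integration.integral_diff[symmetric])
  show "(d - e) * measure M {\<omega> \<in> space M. Y \<omega> \<le> e}
          \<le> (\<integral>\<omega>. max (d - Y \<omega>) 0 \<partial>M) - (\<integral>\<omega>. max (e - Y \<omega>) 0 \<partial>M)"
    unfolding diff step_integral[symmetric]
    by (intro integral_mono step Bochner_Integration.integrable_diff pos_part) (auto simp: indicator_def)
  show "(\<integral>\<omega>. max (d - Y \<omega>) 0 \<partial>M) - (\<integral>\<omega>. max (e - Y \<omega>) 0 \<partial>M)
          \<le> (d - e) * measure M {\<omega> \<in> space M. Y \<omega> \<le> d}"
    unfolding diff step_integral[symmetric]
    by (intro integral_mono step Bochner_Integration.integrable_diff pos_part) (auto simp: indicator_def)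
qed

lemma has_real_derivative_expected_pos_part:
  fixes Y :: "'a \<Rightarrow> real"
  assumes M: "prob_space M" and Y: "integrable M Y"
    and cont: "isCont (\<lambda>y. measure M {\<omega> \<in> space M. Y \<omega> \<le> y}) c"
  shows "((\<lambda>y. \<integral>\<omega>. max (y - Y \<omega>) 0 \<partial>M) has_real_derivative measure M {\<omega> \<in> space M. Y \<omega> \<le> c}) (at c)"
proof -
  define F where "F y = measure M {\<omega> \<in> space M. Y \<omega> \<le> y}" for y
  define G where "G y = (\<integral>\<omega>. max (y - Y \<omega>) 0 \<partial>M)" for y
  note bounds = expected_pos_part_increment_bounds[OF M Y, folded F_def G_def]
  have F: "(F \<longlongrightarrow> F c) (at c)" using cont unfolding F_def[abs_def] isCont_def .
  have "((\<lambda>y. (G y - G c) / (y - c)) \<longlongrightarrow> F c) (at c)"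
  proof (rule tendsto_sandwich[where f="\<lambda>y. min (F c) (F y)" and h="\<lambda>y. max (F c) (F y)"])
    show "\<forall>\<^sub>F y in at c. min (F c) (F y) \<le> (G y - G c) / (y - c)"
      "\<forall>\<^sub>F y in at c. (G y - G c) / (y - c) \<le> max (F c) (F y)"
      unfolding eventually_at_filter by (auto intro!: always_eventually divide_between_min_max bounds)
    show "((\<lambda>y. min (F c) (F y)) \<longlongrightarrow> F c) (at c)" "((\<lambda>y. max (F c) (F y)) \<longlongrightarrow> F c) (at c)"
      using tendsto_min[OF tendsto_const[of "F c"] F] tendsto_max[OF tendsto_const[of "F c"] F] by simp_all
  qed
  then show ?thesis unfolding has_field_derivative_iff G_def F_def by simp
qed

lemma sum_fun_upd:
  fixes f :: "'i \<Rightarrow> 'a::ab_group_add"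
  assumes "finite A"
  shows "sum (f(j := x)) A = sum f A + (if j \<in> A then x - f j else 0)"
proof (cases "j \<in> A")
  case True
  then show ?thesis using assms by (simp add: sum.remove)
next
  case False
  then have "sum (f(j := x)) A = sum f A" by (intro sum.cong) auto
  with False show ?thesis by simp
qed

definition expected_overage :: "'a measure \<Rightarrow> (nat \<Rightarrow> 'a \<Rightarrow> real) \<Rightarrow> nat \<Rightarrow> real \<Rightarrow> real" where
  "expected_overage M X t y = (\<integral>\<omega>. max (y - (\<Sum>k=1..t. X k \<omega>)) 0 \<partial>M)"

lemma has_real_derivative_expected_overage:
  fixes X :: "nat \<Rightarrow> 'a \<Rightarrow> real"
  assumes M: "prob_space M" and X: "\<And>k. k \<in> {1..t} \<Longrightarrow> integrable M (X k)"
    and cont: "isCont (cum_cdf M X t) y"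
  shows "(expected_overage M X t has_real_derivative cum_cdf M X t y) (at y)"
  unfolding expected_overage_def[abs_def] cum_cdf_def
  using cont X unfolding cum_cdf_def[abs_def]
  by (intro has_real_derivative_expected_pos_part[OF M]) auto

lemma expected_excess_inv_level:
  fixes X :: "nat \<Rightarrow> 'a \<Rightarrow> real"
  shows "(\<integral>\<omega>. max (inv_level q X t \<omega>) 0 \<partial>M) = expected_overage M X t (\<Sum>k=1..t. q k)"
  by (simp add: inv_level_def expected_overage_def sum_subtractf)

lemma expected_backorder_inv_level:
  fixes X :: "nat \<Rightarrow> 'a \<Rightarrow> real"
  assumes M: "prob_space M" and X: "\<And>k. k \<in> {1..t} \<Longrightarrow> integrable M (X k)"
  shows "(\<integral>\<omega>. max (- inv_level q X t \<omega>) 0 \<partial>M)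
           = expected_overage M X t (\<Sum>k=1..t. q k) - (\<Sum>k=1..t. q k) + (\<integral>\<omega>. (\<Sum>k=1..t. X k \<omega>) \<partial>M)"
proof -
  interpret prob_space M by (rule M)
  let ?Q = "\<Sum>k=1..t. q k" and ?Y = "\<lambda>\<omega>. \<Sum>k=1..t. X k \<omega>"
  have Y: "integrable M ?Y" using X by auto
  have "max (- inv_level q X t \<omega>) 0 = (max (?Q - ?Y \<omega>) 0 + ?Y \<omega>) - ?Q" for \<omega>
    by (simp add: inv_level_def sum_subtractf max_def)
  then have "(\<integral>\<omega>. max (- inv_level q X t \<omega>) 0 \<partial>M) = (\<integral>\<omega>. (max (?Q - ?Y \<omega>) 0 + ?Y \<omega>) - ?Q \<partial>M)"
    by simp
  also have "\<dots> = (\<integral>\<omega>. max (?Q - ?Y \<omega>) 0 \<partial>M) + (\<integral>\<omega>. ?Y \<omega> \<partial>M) - ?Q"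
    using Y by (simp add: Bochner_Integration.integrable_diff integrable_max prob_space)
  finally show ?thesis by (simp add: expected_overage_def)
qed

lemma mpnvp_cost_eq_expected_overage:
  fixes M :: "'a measure" and X :: "nat \<Rightarrow> 'a \<Rightarrow> real" and q w :: "nat \<Rightarrow> real"
  assumes M: "prob_space M" and X: "\<And>t. t \<in> {1..T} \<Longrightarrow> integrable M (X t)"
  shows "mpnvp_cost M T h b p w X q
      = p * (expected_overage M X T (\<Sum>k=1..T. q k) - (\<Sum>k=1..T. q k) + (\<integral>\<omega>. (\<Sum>k=1..T. X k \<omega>) \<partial>M))
        + (\<Sum>t=1..T. h * expected_overage M X t (\<Sum>k=1..t. q k)
                    + b * (expected_overage M X t (\<Sum>k=1..t. q k) - (\<Sum>k=1..t. q k) + (\<integral>\<omega>. (\<Sum>k=1..t. X k \<omega>) \<partial>M))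
                    + w t * q t - p * (\<integral>\<omega>. X t \<omega> \<partial>M))"
  unfolding mpnvp_cost_def expected_excess_inv_level
  using X by (intro arg_cong2[where f="(+)"] arg_cong2[where f="(-)"] arg_cong2[where f="(*)"] sum.cong refl
                   expected_backorder_inv_level[OF M])
             auto

lemma mpnvp_cost_has_partial_derivative:
  fixes M :: "'a measure" and X :: "nat \<Rightarrow> 'a \<Rightarrow> real" and q w :: "nat \<Rightarrow> real"
  assumes M: "prob_space M" and X: "\<And>t. t \<in> {1..T} \<Longrightarrow> integrable M (X t)"
    and cont: "\<And>t. t \<in> {1..T} \<Longrightarrow> isCont (cum_cdf M X t) (\<Sum>k=1..t. q k)"
    and j: "j \<in> {1..T}"
  shows "((\<lambda>x. mpnvp_cost M T h b p w X (q(j := x))) has_real_derivative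
           (\<Sum>t=j..T. (h + b) * cum_cdf M X t (\<Sum>k=1..t. q k) - b)
           + p * (cum_cdf M X T (\<Sum>k=1..T. q k) - 1) + w j) (at (q j))"
proof -
  define Q where "Q t x = (\<Sum>k=1..t. (q(j := x)) k)" for t x
  define F where "F t = cum_cdf M X t (\<Sum>k=1..t. q k)" for t
  define d where "d t = (if j \<le> t then 1 else 0 :: real)" for t
  have Q: "Q t = (\<lambda>x. (\<Sum>k=1..t. q k) + d t * (x - q j))" for t
    unfolding Q_def[abs_def] sum_fun_upd[OF finite_atLeastAtMost] using j by (auto simp: d_def)
  have overage: "((\<lambda>x. expected_overage M X t (Q t x)) has_real_derivative F t * d t) (at (q j))"
    if "t \<in> {1..T}" for t
  proof (rule DERIV_chain2[where f="expected_overage M X t" and g="Q t"])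
    show "(expected_overage M X t has_real_derivative F t) (at (Q t (q j)))"
      using that X cont unfolding F_def Q by (auto intro!: has_real_derivative_expected_overage[OF M])
    show "(Q t has_real_derivative d t) (at (q j))"
      unfolding Q by (auto intro!: derivative_eq_intros)
  qed
  have "((\<lambda>x. mpnvp_cost M T h b p w X (q(j := x))) has_real_derivative
          p * (F T * d T - d T + 0)
          + (\<Sum>t=1..T. h * (F t * d t) + b * (F t * d t - d t + 0) + w t * (if t = j then 1 else 0) - 0))
        (at (q j))"
    using j by (simp only: mpnvp_cost_eq_expected_overage[OF M X] Q_def[symmetric])
      (intro DERIV_add DERIV_cmult DERIV_diff DERIV_sum DERIV_const overage;
       auto simp: Q intro!: derivative_eq_intros)
  moreover have "(\<Sum>t=1..T. h * (F t * d t) + b * (F t * d t - d t + 0) + w t * (if t = j then 1 else 0) - 0)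
      = (\<Sum>t=j..T. (h + b) * F t - b) + w j"
  proof -
    have "(\<Sum>t=1..T. h * (F t * d t) + b * (F t * d t - d t + 0) + w t * (if t = j then 1 else 0) - 0)
        = (\<Sum>t=1..T. ((h + b) * F t - b) * d t + (if t = j then w t else 0))"
      by (intro sum.cong) (auto simp: algebra_simps)
    also have "\<dots> = (\<Sum>t=1..T. ((h + b) * F t - b) * d t) + w j"
      using j by (simp add: sum.distrib)
    also have "(\<Sum>t=1..T. ((h + b) * F t - b) * d t) = (\<Sum>t=j..T. (h + b) * F t - b)"
      using j by (intro sum.mono_neutral_cong_right) (auto simp: d_def)
    finally show ?thesis .
  qed
  moreover have "d T = 1" using j by (simp add: d_def)
  ultimately show ?thesis by (simp add: F_def algebra_simps)
qed

lemma quantile_right_inverse: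
  fixes G :: "real \<Rightarrow> real"
  assumes cont: "\<And>x. isCont G x" and fin: "quantile_finite G a"
  shows "G (quantile G a) = a"
proof -
  let ?S = "{x. a \<le> G x}"
  have ne: "?S \<noteq> {}" and bdd: "bdd_below ?S" using fin by (auto simp: quantile_finite_def)
  have "closed ?S"
    by (rule closed_Collect_le) (auto intro!: continuous_at_imp_continuous_on cont)
  then have ge: "a \<le> G (quantile G a)"
    using closed_contains_Inf[OF ne bdd] unfolding quantile_def by simp
  show ?thesis
  proof (rule ccontr)
    assume "G (quantile G a) \<noteq> a"
    with ge have "a < G (quantile G a)" by simp
    from order_tendstoD(1)[OF cont[unfolded isCont_def] this] obtain d where d: "d > 0"
      and above: "\<And>x. x \<noteq> quantile G a \<Longrightarrow> dist x (quantile G a) < d \<Longrightarrow> a < G x"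
      unfolding eventually_at by blast
    have "quantile G a - d / 2 \<in> ?S" using d by (auto intro!: less_imp_le above simp: dist_real_def)
    then have "quantile G a \<le> quantile G a - d / 2" unfolding quantile_def by (rule cInf_lower[OF _ bdd])
    with d show False by simp
  qed
qed

lemma partial_sums_eq_if_differences_eq:
  fixes q u :: "nat \<Rightarrow> 'a::ab_group_add"
  assumes first: "q 1 = u 1" and diff: "\<And>t. 2 \<le> t \<Longrightarrow> t \<le> n \<Longrightarrow> q t = u t - u (t - 1)"
    and t: "1 \<le> t" "t \<le> n"
  shows "(\<Sum>k=1..t. q k) = u t"
  using t
proof (induction t)
  case (Suc t)
  show ?case
  proof (cases "t = 0")
    case True
    then show ?thesis using first by simp
  next
    case False
    then show ?thesis using Suc diff[of "Suc t"] by simp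
  qed
qed simp

lemma stationarity_at_critical_fractiles:
  fixes F w :: "nat \<Rightarrow> real"
  assumes hbp: "h + b + p \<noteq> 0" and hb: "h + b \<noteq> 0" and j: "j \<le> T"
    and F: "\<And>t. t \<in> {j..T} \<Longrightarrow> F t = (if t < T then (b - (1 + \<nu>) * (w t - w (t + 1))) / (h + b)
                                               else (b - (1 + \<nu>) * w T + p) / (h + b + p))"
  shows "(\<Sum>t=j..T. (h + b) * F t - b) + p * (F T - 1) + w j = - \<nu> * w j"
proof -
  have "(\<Sum>t=j..<T. (h + b) * F t - b) = (\<Sum>t=j..<T. (1 + \<nu>) * (w (Suc t) - w t))"
    using F hb by (intro sum.cong) (auto simp: field_simps)
  also have "\<dots> = (1 + \<nu>) * (w T - w j)"
    using j by (simp add: sum_distrib_left[symmetric] sum_Suc_diff')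
  finally have "(\<Sum>t=j..<T. (h + b) * F t - b) = (1 + \<nu>) * (w T - w j)" .
  moreover have "(h + b + p) * F T = b - (1 + \<nu>) * w T + p"
    using F[of T] hbp j by simp
  moreover have "(\<Sum>t=j..T. (h + b) * F t - b) = (\<Sum>t=j..<T. (h + b) * F t - b) + ((h + b) * F T - b)"
    using j by (simp add: atLeastLessThanSuc_atLeastAtMost[symmetric])
  ultimately show ?thesis by (simp add: algebra_simps)
qed

theorem theorem3p1:
  fixes M :: "'a measure" and X :: "nat \<Rightarrow> 'a \<Rightarrow> real"
    and T :: nat and h b p \<nu> :: real and w :: "nat \<Rightarrow> real"
    and qs :: "nat \<Rightarrow> real"
  assumes M: "prob_space M"
    and T2: "2 \<le> T"
    and Xmeas: "\<And>t. t \<in> {1..T} \<Longrightarrow> X t \<in> borel_measurable M"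
    and Xint: "\<And>t. t \<in> {1..T} \<Longrightarrow> integrable M (X t)"
    and Fcont: "absolutely_continuous (Pi\<^sub>M {1..T} (\<lambda>_. lborel))
                  (distr M (Pi\<^sub>M {1..T} (\<lambda>_. lborel)) (\<lambda>\<omega>. \<lambda>t\<in>{1..T}. X t \<omega>))"
    and h: "h \<ge> 0" and b: "b \<ge> 0" and p: "p \<ge> 0" and hb: "h + b > 0"
    and wmono: "\<And>t. t \<in> {1..<T} \<Longrightarrow> w (t + 1) \<le> w t"
    and wpos: "\<And>t. t \<in> {1..T} \<Longrightarrow> w t > 0"
    and nu: "\<nu> \<ge> 0"
    and cond1: "\<And>t. t \<in> {1..<T} \<Longrightarrow> w t > w (t + 1) \<Longrightarrow> \<nu> \<le> b / (w t - w (t + 1)) - 1"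
    and cond2: "\<nu> \<le> (b + p) / w T - 1"
    and qfin: "\<And>t. t \<in> {1..<T} \<Longrightarrow>
                 quantile_finite (cum_cdf M X t) ((b - (1 + \<nu>) * (w t - w (t + 1))) / (h + b))"
    and qfinT: "quantile_finite (cum_cdf M X T) ((b - (1 + \<nu>) * w T + p) / (h + b + p))"
    and qs1: "qs 1 = quantile (cum_cdf M X 1) ((b - (1 + \<nu>) * (w 1 - w 2)) / (h + b))"
    and qst: "\<And>t. 2 \<le> t \<Longrightarrow> t \<le> T - 1 \<Longrightarrow>
                qs t = quantile (cum_cdf M X t) ((b - (1 + \<nu>) * (w t - w (t + 1))) / (h + b))
                     - quantile (cum_cdf M X (t - 1)) ((b - (1 + \<nu>) * (w (t - 1) - w t)) / (h + b))"
    and qsT: "qs T = quantile (cum_cdf M X T) ((b - (1 + \<nu>) * w T + p) / (h + b + p))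
                - quantile (cum_cdf M X (T - 1)) ((b - (1 + \<nu>) * (w (T - 1) - w T)) / (h + b))"
  shows "\<forall>j \<in> {1..T}.
           ((\<lambda>x. mpnvp_cost M T h b p w X (qs(j := x))) has_real_derivative (- \<nu> * w j)) (at (qs j))"
proof
  (* cond1, cond2, wmono, wpos and nu only place the critical fractiles in [0, 1];
     stationarity needs just the finiteness of the quantiles (qfin, qfinT). *)
  fix j assume j: "j \<in> {1..T}"
  define level where "level t = (if t < T then (b - (1 + \<nu>) * (w t - w (t + 1))) / (h + b)
                                 else (b - (1 + \<nu>) * w T + p) / (h + b + p))" for t
  have cont: "isCont (cum_cdf M X t) y" if "t \<in> {1..T}" for t y
    using isCont_cum_cdf[OF M Xmeas Fcont that] .
  have partial_sums: "(\<Sum>k=1..t. qs k) = quantile (cum_cdf M X t) (level t)" if "t \<in> {1..T}" for t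
  proof (rule partial_sums_eq_if_differences_eq)
    show "qs 1 = quantile (cum_cdf M X 1) (level 1)"
      using qs1 T2 by (simp add: level_def numeral_2_eq_2)
    show "qs t = quantile (cum_cdf M X t) (level t) - quantile (cum_cdf M X (t - 1)) (level (t - 1))"
      if "2 \<le> t" "t \<le> T" for t
      using that qst[OF that(1)] qsT by (cases "t = T") (auto simp: level_def)
  qed (use that in auto)
  have cdf_partial_sums: "cum_cdf M X t (\<Sum>k=1..t. qs k) = level t" if "t \<in> {1..T}" for t
    unfolding partial_sums[OF that] using that qfin qfinT
    by (intro quantile_right_inverse cont) (auto simp: level_def)
  have "((\<lambda>x. mpnvp_cost M T h b p w X (qs(j := x))) has_real_derivative
          (\<Sum>t=j..T. (h + b) * cum_cdf M X t (\<Sum>k=1..t. qs k) - b)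
          + p * (cum_cdf M X T (\<Sum>k=1..T. qs k) - 1) + w j) (at (qs j))"
    using cont j by (intro mpnvp_cost_has_partial_derivative[OF M Xint])
  moreover have "(\<Sum>t=j..T. (h + b) * cum_cdf M X t (\<Sum>k=1..t. qs k) - b)
          + p * (cum_cdf M X T (\<Sum>k=1..T. qs k) - 1) + w j = - \<nu> * w j"
    using hb p j by (intro stationarity_at_critical_fractiles cdf_partial_sums[unfolded level_def]) auto
  ultimately show "((\<lambda>x. mpnvp_cost M T h b p w X (qs(j := x))) has_real_derivative (- \<nu> * w j)) (at (qs j))"
    by simp
qed

end
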